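(* Let $R$ be a commutative domain with unit, let $f\in R$ be nonzero and non-invertible, and let $S=R[u,v]/(uv-f)$, with $R$ regarded as a subring of $S$. Let $a\in R$. Then: (i) if $a$ is irreducible in $S$, then $a$ is irreducible in $R$; (ii) if $a$ is irreducible in $R$ and not associated with $f$ in $R$, then $a$ is irreducible in $S$. *)

theory Defs
  imports "HOL-Algebra.Algebra"
begin

text \<open>The polynomial ring R[u,v], realised as (R[u])[v] via the univariate
  polynomial construction of HOL-Algebra.\<close>

abbreviation Ruv :: "('a, 'm) ring_scheme \<Rightarrow> (nat \<Rightarrow> 'a, nat \<Rightarrow> nat \<Rightarrow> 'a) up_ring"
  where "Ruv R \<equiv> UP (UP R)"

definition const_uv :: "('a, 'm) ring_scheme \<Rightarrow> 'a \<Rightarrow> nat \<Rightarrow> nat \<Rightarrow> 'a"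
  where "const_uv R a = monom (Ruv R) (monom (UP R) a 0) 0"

definition var_u :: "('a, 'm) ring_scheme \<Rightarrow> nat \<Rightarrow> nat \<Rightarrow> 'a"
  where "var_u R = monom (Ruv R) (monom (UP R) \<one>\<^bsub>R\<^esub> 1) 0"

definition var_v :: "('a, 'm) ring_scheme \<Rightarrow> nat \<Rightarrow> nat \<Rightarrow> 'a"
  where "var_v R = monom (Ruv R) \<one>\<^bsub>UP R\<^esub> 1"

definition uv_ideal :: "('a, 'm) ring_scheme \<Rightarrow> 'a \<Rightarrow> (nat \<Rightarrow> nat \<Rightarrow> 'a) set"
  where "uv_ideal R f =
     PIdl\<^bsub>Ruv R\<^esub> (var_u R \<otimes>\<^bsub>Ruv R\<^esub> var_v R \<ominus>\<^bsub>Ruv R\<^esub> const_uv R f)"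

definition S_ring :: "('a, 'm) ring_scheme \<Rightarrow> 'a \<Rightarrow> (nat \<Rightarrow> nat \<Rightarrow> 'a) set ring"
  where "S_ring R f = Ruv R Quot uv_ideal R f"

definition to_S :: "('a, 'm) ring_scheme \<Rightarrow> 'a \<Rightarrow> 'a \<Rightarrow> (nat \<Rightarrow> nat \<Rightarrow> 'a) set"
  where "to_S R f a = uv_ideal R f +>\<^bsub>Ruv R\<^esub> const_uv R a"

end

theory Submission
  imports Defs
begin

text \<open>Since \<open>f \<noteq> 0\<close>, \<open>S\<close> is the ring \<open>R[u, f/u]\<close> inside the Laurent polynomials
  \<open>R[u, u\<^sup>-\<^sup>1]\<close>. Every element of \<open>S\<close> has the form \<open>A(u) + B(v)\<close>, multiplying it by
  \<open>u\<^sup>n\<close> with \<open>n = deg B\<close> moves it into \<open>R[u]\<close>, and \<open>R[u]\<close> embeds into \<open>S\<close>. So a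
  factorisation \<open>a = b c\<close> in \<open>S\<close> becomes a factorisation of the monomial \<open>a u\<^sup>n\<^sup>+\<^sup>m\<close>
  in the domain \<open>R[u]\<close>, whose factors are monomials: either \<open>b\<close> is a divisor of \<open>a\<close>
  in \<open>R\<close>, or a positive power of \<open>u\<close> was needed, and then \<open>f\<close> divides \<open>a\<close>.
  The \<open>R\<close>-algebra retraction \<open>S \<rightarrow> R\<close>, \<open>u \<mapsto> f\<close>, \<open>v \<mapsto> 1\<close>, shows that \<open>R \<rightarrow> S\<close>
  reflects zero, units and divisibility.\<close>

section \<open>Monomial factors of polynomials over a domain\<close>

context UP_ring
begin

lemma coeff_monom_mult_below:
  assumes "c \<in> carrier R" "q \<in> carrier P" "i < k"
  shows "up_ring.coeff P (up_ring.monom P c k \<otimes>\<^bsub>P\<^esub> q) i = \<zero>"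
proof -
  have "up_ring.coeff P (up_ring.monom P c k \<otimes>\<^bsub>P\<^esub> q) i
      = (\<Oplus>j\<in>{..i}. up_ring.coeff P (up_ring.monom P c k) j \<otimes> up_ring.coeff P q (i - j))"
    using assms by (simp only: coeff_mult monom_closed)
  also have "\<dots> = (\<Oplus>j\<in>{..i}. \<zero>)"
    by (rule R.finsum_cong') (use assms in auto)
  finally show ?thesis by simp
qed

lemma poly_decomp_X:
  assumes p: "p \<in> carrier P"
  obtains p' where "p' \<in> carrier P"
    and "p = up_ring.monom P (up_ring.coeff P p 0) 0 \<oplus>\<^bsub>P\<^esub> up_ring.monom P \<one> 1 \<otimes>\<^bsub>P\<^esub> p'"
    and "\<And>j. up_ring.coeff P p' j = up_ring.coeff P p (Suc j)"
proof -
  define p' where "p' = (\<lambda>j. up_ring.coeff P p (Suc j))"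
  have "p' \<in> up R"
  proof (rule mem_upI)
    show "\<And>n. p' n \<in> carrier R"
      using p by (simp add: p'_def)
    have "bound \<zero> (deg R p) p'"
      unfolding bound_def p'_def using deg_aboveD[OF _ p] by auto
    then show "\<exists>n. bound \<zero> n p'" ..
  qed
  then have p'_carrier: "p' \<in> carrier P" and "\<And>j. up_ring.coeff P p' j = p' j"
    unfolding P_def by (simp_all add: UP_def)
  then have coeff_p': "\<And>j. up_ring.coeff P p' j = up_ring.coeff P p (Suc j)"
    by (simp add: p'_def)
  have "p = up_ring.monom P (up_ring.coeff P p 0) 0 \<oplus>\<^bsub>P\<^esub> up_ring.monom P \<one> 1 \<otimes>\<^bsub>P\<^esub> p'"
  proof (rule up_eqI)
    fix n
    have "up_ring.coeff P (up_ring.monom P \<one> 1 \<otimes>\<^bsub>P\<^esub> p') n = (if n = 0 then \<zero> else up_ring.coeff P p n)"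
    proof (cases n)
      case 0
      then show ?thesis using coeff_monom_mult_below[OF R.one_closed p'_carrier] by simp
    next
      case (Suc m)
      then show ?thesis
        using coeff_monom_mult[OF R.one_closed p'_carrier, where n = 1 and m = m] coeff_p' p by (simp del: coeff_mult)
    qed
    then show "up_ring.coeff P p n
        = up_ring.coeff P (up_ring.monom P (up_ring.coeff P p 0) 0 \<oplus>\<^bsub>P\<^esub> up_ring.monom P \<one> 1 \<otimes>\<^bsub>P\<^esub> p') n"
      using p p'_carrier by (simp del: coeff_mult)
  qed (use p p'_carrier in simp_all)
  then show ?thesis using that p'_carrier coeff_p' by blast
qed

lemma coeff_mult_lowest:
  assumes p: "p \<in> carrier P" and q: "q \<in> carrier P"
    and below_i: "\<And>i. i < i0 \<Longrightarrow> up_ring.coeff P p i = \<zero>"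
    and below_j: "\<And>j. j < j0 \<Longrightarrow> up_ring.coeff P q j = \<zero>"
  shows "up_ring.coeff P (p \<otimes>\<^bsub>P\<^esub> q) (i0 + j0) = up_ring.coeff P p i0 \<otimes> up_ring.coeff P q j0"
proof -
  have "up_ring.coeff P (p \<otimes>\<^bsub>P\<^esub> q) (i0 + j0)
      = (\<Oplus>i\<in>{..i0 + j0}. up_ring.coeff P p i \<otimes> up_ring.coeff P q (i0 + j0 - i))"
    using p q by (simp only: coeff_mult)
  also have "\<dots> = (\<Oplus>i\<in>{..i0 + j0}.
      if i0 = i then up_ring.coeff P p i \<otimes> up_ring.coeff P q (i0 + j0 - i) else \<zero>)"
  proof (rule R.finsum_cong')
    fix i assume "i \<in> {..i0 + j0}"
    then consider "i < i0" | "i = i0" | "i0 + j0 - i < j0" by fastforce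
    then show "up_ring.coeff P p i \<otimes> up_ring.coeff P q (i0 + j0 - i)
        = (if i0 = i then up_ring.coeff P p i \<otimes> up_ring.coeff P q (i0 + j0 - i) else \<zero>)"
      by cases (use p q below_i below_j in auto)
  qed (use p q in auto)
  also have "\<dots> = up_ring.coeff P p i0 \<otimes> up_ring.coeff P q j0"
    by (subst R.finsum_singleton) (use p q in auto)
  finally show ?thesis .
qed

end

lemma (in UP_domain) factor_of_monom_is_monom:
  assumes p: "p \<in> carrier P" and q: "q \<in> carrier P" and a: "a \<in> carrier R" "a \<noteq> \<zero>"
    and pq: "p \<otimes>\<^bsub>P\<^esub> q = up_ring.monom P a k"
  shows "p = up_ring.monom P (up_ring.coeff P p (deg R p)) (deg R p)"
proof -
  have "up_ring.monom P a k \<noteq> \<zero>\<^bsub>P\<^esub>"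
  proof
    assume "up_ring.monom P a k = \<zero>\<^bsub>P\<^esub>"
    then have "up_ring.coeff P (up_ring.monom P a k) k = \<zero>" by simp
    then show False using a by simp
  qed
  then have p_nz: "p \<noteq> \<zero>\<^bsub>P\<^esub>" and q_nz: "q \<noteq> \<zero>\<^bsub>P\<^esub>"
    using pq p q by auto
  then have ex_p: "\<exists>i. up_ring.coeff P p i \<noteq> \<zero>" and ex_q: "\<exists>j. up_ring.coeff P q j \<noteq> \<zero>"
    using lcoeff_nonzero p q by blast+
  define i0 where "i0 = (LEAST i. up_ring.coeff P p i \<noteq> \<zero>)"
  define j0 where "j0 = (LEAST j. up_ring.coeff P q j \<noteq> \<zero>)"
  have below_i: "up_ring.coeff P p i = \<zero>" if "i < i0" for i
    using not_less_Least that unfolding i0_def by blast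
  have below_j: "up_ring.coeff P q j = \<zero>" if "j < j0" for j
    using not_less_Least that unfolding j0_def by blast
  have "up_ring.coeff P p i0 \<otimes> up_ring.coeff P q j0 \<noteq> \<zero>"
    using LeastI_ex[OF ex_p] LeastI_ex[OF ex_q] p q R.integral_iff unfolding i0_def j0_def by simp
  then have "up_ring.coeff P (up_ring.monom P a k) (i0 + j0) \<noteq> \<zero>"
    using coeff_mult_lowest[OF p q below_i below_j] pq by simp
  then have "k = i0 + j0" using a by (simp split: if_splits)
  moreover have "deg R p + deg R q = k"
    using deg_mult[OF p_nz q_nz p q] pq a by simp
  moreover have "i0 \<le> deg R p"
    unfolding i0_def by (rule Least_le) (rule lcoeff_nonzero[OF p_nz p])
  moreover have "j0 \<le> deg R q"
    unfolding j0_def by (rule Least_le) (rule lcoeff_nonzero[OF q_nz q])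
  ultimately have i0_deg: "i0 = deg R p" by arith
  show ?thesis
  proof (rule up_eqI)
    fix n
    show "up_ring.coeff P p n
        = up_ring.coeff P (up_ring.monom P (up_ring.coeff P p (deg R p)) (deg R p)) n"
    proof (cases rule: linorder_cases[of n "deg R p"])
      case less
      then show ?thesis using below_i[of n] p i0_deg by simp
    next
      case greater
      then show ?thesis using deg_aboveD[OF greater p] p by simp
    next
      case equal
      then show ?thesis using p by simp
    qed
  next
    show "up_ring.monom P (up_ring.coeff P p (deg R p)) (deg R p) \<in> carrier P"
      using p by simp
  qed (rule p)
qed

lemma (in UP_domain) factors_of_monom:
  assumes p: "p \<in> carrier P" and q: "q \<in> carrier P" and a: "a \<in> carrier R" "a \<noteq> \<zero>"
    and pq: "p \<otimes>\<^bsub>P\<^esub> q = up_ring.monom P a N"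
  obtains \<beta> \<gamma> k l where "\<beta> \<in> carrier R" "\<gamma> \<in> carrier R" "\<beta> \<otimes> \<gamma> = a" "k + l = N"
    and "p = up_ring.monom P \<beta> k" "q = up_ring.monom P \<gamma> l"
proof -
  define k where "k = deg R p"
  define l where "l = deg R q"
  define \<beta> where "\<beta> = up_ring.coeff P p k"
  define \<gamma> where "\<gamma> = up_ring.coeff P q l"
  have \<beta>: "\<beta> \<in> carrier R" and \<gamma>: "\<gamma> \<in> carrier R"
    using p q by (simp_all add: \<beta>_def \<gamma>_def)
  have p_eq: "p = up_ring.monom P \<beta> k"
    unfolding \<beta>_def k_def using factor_of_monom_is_monom[OF p q a pq] .
  have q_eq: "q = up_ring.monom P \<gamma> l"
    unfolding \<gamma>_def l_def using factor_of_monom_is_monom[OF q p a] pq UP_m_comm[OF p q] by simp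
  have "up_ring.monom P (\<beta> \<otimes> \<gamma>) (k + l) = up_ring.monom P a N"
    using pq \<beta> \<gamma> by (simp add: p_eq q_eq)
  then have "up_ring.coeff P (up_ring.monom P (\<beta> \<otimes> \<gamma>) (k + l)) N
      = up_ring.coeff P (up_ring.monom P a N) N"
    by (simp only:)
  then have "(if k + l = N then \<beta> \<otimes> \<gamma> else \<zero>) = a"
    using a \<beta> \<gamma> by (simp del: monom_mult)
  then have "k + l = N" and "\<beta> \<otimes> \<gamma> = a"
    using a by (simp_all split: if_splits)
  then show ?thesis using that \<beta> \<gamma> p_eq q_eq by blast
qed

section \<open>The ring \<open>S = R[u,v]/(uv - f)\<close>\<close>

locale uv_quotient =
  fixes R (structure) and f
  assumes R_domain: "domain R" and f_carrier: "f \<in> carrier R" and f_nonzero: "f \<noteq> \<zero>"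
begin

sublocale domain R by (rule R_domain)

sublocale P: UP_domain R "UP R" by unfold_locales

sublocale Q: UP_domain "UP R" "Ruv R" by (rule UP_domain.intro, rule P.UP_domain)

abbreviation "S \<equiv> S_ring R f"
abbreviation "I \<equiv> uv_ideal R f"
abbreviation "rel \<equiv> var_u R \<otimes>\<^bsub>Ruv R\<^esub> var_v R \<ominus>\<^bsub>Ruv R\<^esub> const_uv R f"
abbreviation "\<iota> \<equiv> to_S R f"
abbreviation "indet \<equiv> up_ring.monom (UP R) \<one> 1"

definition proj :: "(nat \<Rightarrow> nat \<Rightarrow> 'a) \<Rightarrow> (nat \<Rightarrow> nat \<Rightarrow> 'a) set"
  where "proj p = I +>\<^bsub>Ruv R\<^esub> p"

abbreviation "U \<equiv> proj (var_u R)"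
abbreviation "V \<equiv> proj (var_v R)"

lemma var_u_closed [simp]: "var_u R \<in> carrier (Ruv R)"
  unfolding var_u_def by simp

lemma var_v_closed [simp]: "var_v R \<in> carrier (Ruv R)"
  unfolding var_v_def by simp

lemma const_uv_closed [simp]: "r \<in> carrier R \<Longrightarrow> const_uv R r \<in> carrier (Ruv R)"
  unfolding const_uv_def by simp

lemma rel_closed [simp]: "rel \<in> carrier (Ruv R)"
  using f_carrier by simp

lemma ideal_I: "ideal I (Ruv R)"
  unfolding uv_ideal_def by (rule Q.P.cgenideal_ideal[OF rel_closed])

sublocale I: ideal I "Ruv R" by (rule ideal_I)

sublocale S: cring S
  unfolding S_ring_def by (rule I.quotient_is_cring[OF Q.UP_cring])

lemma proj_hom: "proj \<in> ring_hom (Ruv R) S"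
  unfolding proj_def S_ring_def by (rule I.rcos_ring_hom)

lemma proj_surj:
  assumes "x \<in> carrier S" obtains p where "p \<in> carrier (Ruv R)" "x = proj p"
  using assms unfolding S_ring_def FactRing_simps proj_def by auto

lemma proj_eqD:
  assumes p: "p \<in> carrier (Ruv R)" and q: "q \<in> carrier (Ruv R)" and eq: "proj p = proj q"
  shows "p \<ominus>\<^bsub>Ruv R\<^esub> q \<in> I"
proof -
  have "p \<in> proj q"
    using I.a_rcos_self[OF p] eq by (simp add: proj_def)
  then show ?thesis
    using I.a_rcos_module_minus[OF Q.P.ring_axioms q p] by (simp add: proj_def)
qed

lemma proj_rel: "proj rel = \<zero>\<^bsub>S\<^esub>"
proof -
  have "rel \<in> I"
    unfolding uv_ideal_def by (rule Q.P.cgenideal_self[OF rel_closed])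
  then show ?thesis
    by (simp add: proj_def S_ring_def FactRing_def I.a_rcos_const)
qed

lemma const_uv_hom: "const_uv R \<in> ring_hom R (Ruv R)"
proof -
  have "const_uv R = (\<lambda>A. up_ring.monom (Ruv R) A 0) \<circ> (\<lambda>r. up_ring.monom (UP R) r 0)"
    by (auto simp: const_uv_def)
  then show ?thesis
    using ring_hom_trans[OF P.const_ring_hom Q.const_ring_hom] by simp
qed

lemma to_S_hom: "\<iota> \<in> ring_hom R S"
proof -
  have "\<iota> = proj \<circ> const_uv R"
    by (auto simp: to_S_def proj_def)
  then show ?thesis
    using ring_hom_trans[OF const_uv_hom proj_hom] by simp
qed

lemma to_S_closed [simp]: "r \<in> carrier R \<Longrightarrow> \<iota> r \<in> carrier S"
  using ring_hom_closed[OF to_S_hom] .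

lemma U_closed [simp]: "U \<in> carrier S"
  using ring_hom_closed[OF proj_hom var_u_closed] .

lemma V_closed [simp]: "V \<in> carrier S"
  using ring_hom_closed[OF proj_hom var_v_closed] .

lemma U_mult_V: "U \<otimes>\<^bsub>S\<^esub> V = \<iota> f"
proof -
  have "var_u R \<otimes>\<^bsub>Ruv R\<^esub> var_v R = rel \<oplus>\<^bsub>Ruv R\<^esub> const_uv R f"
    using var_u_closed var_v_closed const_uv_closed[OF f_carrier] by algebra
  then have "U \<otimes>\<^bsub>S\<^esub> V = proj rel \<oplus>\<^bsub>S\<^esub> proj (const_uv R f)"
    using ring_hom_mult[OF proj_hom var_u_closed var_v_closed]
      ring_hom_add[OF proj_hom rel_closed const_uv_closed[OF f_carrier]] by simp
  also have "\<dots> = proj (const_uv R f)"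
    using proj_rel ring_hom_closed[OF proj_hom const_uv_closed[OF f_carrier]] by simp
  finally show ?thesis
    by (simp add: to_S_def proj_def)
qed

section \<open>Every element of \<open>S\<close> is \<open>A(u) + B(v)\<close>\<close>

definition eval_S :: "(nat \<Rightarrow> nat \<Rightarrow> 'a) set \<Rightarrow> (nat \<Rightarrow> 'a) \<Rightarrow> (nat \<Rightarrow> nat \<Rightarrow> 'a) set"
  where "eval_S s = UnivPoly.eval R S \<iota> s"

sublocale S_eval: UP_pre_univ_prop R S \<iota> "UP R"
  by (rule UP_pre_univ_propI[OF cring_axioms S.cring_axioms to_S_hom])

lemma eval_S_hom: "s \<in> carrier S \<Longrightarrow> eval_S s \<in> ring_hom (UP R) S"
  unfolding eval_S_def by (rule S_eval.eval_ring_hom)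

lemma eval_S_closed [simp]:
  "s \<in> carrier S \<Longrightarrow> A \<in> carrier (UP R) \<Longrightarrow> eval_S s A \<in> carrier S"
  using ring_hom_closed[OF eval_S_hom] .

lemma eval_S_add [simp]:
  "s \<in> carrier S \<Longrightarrow> A \<in> carrier (UP R) \<Longrightarrow> B \<in> carrier (UP R) \<Longrightarrow>
    eval_S s (A \<oplus>\<^bsub>UP R\<^esub> B) = eval_S s A \<oplus>\<^bsub>S\<^esub> eval_S s B"
  using ring_hom_add[OF eval_S_hom] .

lemma eval_S_mult [simp]:
  "s \<in> carrier S \<Longrightarrow> A \<in> carrier (UP R) \<Longrightarrow> B \<in> carrier (UP R) \<Longrightarrow>
    eval_S s (A \<otimes>\<^bsub>UP R\<^esub> B) = eval_S s A \<otimes>\<^bsub>S\<^esub> eval_S s B"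
  using ring_hom_mult[OF eval_S_hom] .

lemma eval_S_monom [simp]:
  "r \<in> carrier R \<Longrightarrow> s \<in> carrier S \<Longrightarrow>
    eval_S s (up_ring.monom (UP R) r n) = \<iota> r \<otimes>\<^bsub>S\<^esub> s [^]\<^bsub>S\<^esub> n"
  unfolding eval_S_def by (rule S_eval.eval_monom)

lemma eval_S_const [simp]:
  "r \<in> carrier R \<Longrightarrow> s \<in> carrier S \<Longrightarrow> eval_S s (up_ring.monom (UP R) r 0) = \<iota> r"
  unfolding eval_S_def by (rule S_eval.eval_const)

lemma eval_S_indet [simp]: "s \<in> carrier S \<Longrightarrow> eval_S s (up_ring.monom (UP R) \<one> (Suc 0)) = s"
  unfolding eval_S_def using S_eval.eval_monom1 by simp

lemma to_S_one [simp]: "\<iota> \<one> = \<one>\<^bsub>S\<^esub>"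
  using ring_hom_one[OF to_S_hom] .

lemma proj_const_v:
  assumes A: "A \<in> carrier (UP R)"
  shows "proj (up_ring.monom (Ruv R) A 0) = eval_S U A"
proof (rule S_eval.UP_hom_unique[OF _ _ _ _ _ _ A U_closed])
  show "ring_hom_cring (UP R) S (\<lambda>A. proj (up_ring.monom (Ruv R) A 0))"
    using ring_hom_trans[OF Q.const_ring_hom proj_hom]
    by (intro ring_hom_cringI[OF P.UP_cring S.cring_axioms]) (simp add: comp_def)
  show "ring_hom_cring (UP R) S (eval_S U)"
    by (rule ring_hom_cringI[OF P.UP_cring S.cring_axioms eval_S_hom[OF U_closed]])
  show "proj (up_ring.monom (Ruv R) (up_ring.monom (UP R) \<one> (Suc 0)) 0) = U"
    by (simp add: var_u_def)
  show "\<And>r. r \<in> carrier R \<Longrightarrow> proj (up_ring.monom (Ruv R) (up_ring.monom (UP R) r 0) 0) = \<iota> r"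
    by (simp add: to_S_def proj_def const_uv_def)
qed simp_all

definition uv_sums :: "(nat \<Rightarrow> nat \<Rightarrow> 'a) set set"
  where "uv_sums = {eval_S U A \<oplus>\<^bsub>S\<^esub> eval_S V B | A B. A \<in> carrier (UP R) \<and> B \<in> carrier (UP R)}"

lemma uv_sumsI:
  "A \<in> carrier (UP R) \<Longrightarrow> B \<in> carrier (UP R) \<Longrightarrow> eval_S U A \<oplus>\<^bsub>S\<^esub> eval_S V B \<in> uv_sums"
  unfolding uv_sums_def by blast

lemma uv_sumsE:
  assumes "x \<in> uv_sums"
  obtains A B where "A \<in> carrier (UP R)" "B \<in> carrier (UP R)" "x = eval_S U A \<oplus>\<^bsub>S\<^esub> eval_S V B"
  using assms unfolding uv_sums_def by blast

lemma eval_U_in_uv_sums: "A \<in> carrier (UP R) \<Longrightarrow> eval_S U A \<in> uv_sums"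
  using uv_sumsI[of A "\<zero>\<^bsub>UP R\<^esub>"] ring_hom_zero[OF eval_S_hom[OF V_closed] P.UP_ring S.ring_axioms]
  by simp

lemma uv_sums_add: "x \<in> uv_sums \<Longrightarrow> y \<in> uv_sums \<Longrightarrow> x \<oplus>\<^bsub>S\<^esub> y \<in> uv_sums"
proof (elim uv_sumsE)
  fix A B A' B'
  assume "A \<in> carrier (UP R)" "B \<in> carrier (UP R)" "A' \<in> carrier (UP R)" "B' \<in> carrier (UP R)"
    and "x = eval_S U A \<oplus>\<^bsub>S\<^esub> eval_S V B" "y = eval_S U A' \<oplus>\<^bsub>S\<^esub> eval_S V B'"
  then have "x \<oplus>\<^bsub>S\<^esub> y
      = eval_S U (A \<oplus>\<^bsub>UP R\<^esub> A') \<oplus>\<^bsub>S\<^esub> eval_S V (B \<oplus>\<^bsub>UP R\<^esub> B')"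
    by (simp add: S.a_ac)
  also have "\<dots> \<in> uv_sums"
    using \<open>A \<in> carrier (UP R)\<close> \<open>A' \<in> carrier (UP R)\<close> \<open>B \<in> carrier (UP R)\<close> \<open>B' \<in> carrier (UP R)\<close>
    by (intro uv_sumsI) simp_all
  finally show ?thesis .
qed

text \<open>Using \<open>uv = f\<close>: \<open>v (a\<^sub>0 + u A'(u) + B(v)) = f A'(u) + v (a\<^sub>0 + B(v))\<close>.\<close>

lemma V_mult_uv_sums:
  assumes "x \<in> uv_sums" shows "V \<otimes>\<^bsub>S\<^esub> x \<in> uv_sums"
  using assms
proof (elim uv_sumsE)
  fix A B
  assume A: "A \<in> carrier (UP R)" and B: "B \<in> carrier (UP R)"
    and x: "x = eval_S U A \<oplus>\<^bsub>S\<^esub> eval_S V B"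
  obtain A' where A': "A' \<in> carrier (UP R)"
    and A_eq: "A = up_ring.monom (UP R) (up_ring.coeff (UP R) A 0) 0 \<oplus>\<^bsub>UP R\<^esub> indet \<otimes>\<^bsub>UP R\<^esub> A'"
    using P.poly_decomp_X[OF A] by blast
  define a0 where "a0 = up_ring.coeff (UP R) A 0"
  have a0: "a0 \<in> carrier R" using A by (simp add: a0_def)
  have A_at_U: "eval_S U A = \<iota> a0 \<oplus>\<^bsub>S\<^esub> U \<otimes>\<^bsub>S\<^esub> eval_S U A'"
    by (subst A_eq) (simp add: A a0 A' a0_def)
  have "V \<otimes>\<^bsub>S\<^esub> x = (U \<otimes>\<^bsub>S\<^esub> V) \<otimes>\<^bsub>S\<^esub> eval_S U A'
      \<oplus>\<^bsub>S\<^esub> V \<otimes>\<^bsub>S\<^esub> (\<iota> a0 \<oplus>\<^bsub>S\<^esub> eval_S V B)"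
    unfolding x A_at_U
    using to_S_closed[OF a0] eval_S_closed[OF U_closed A'] eval_S_closed[OF V_closed B] U_closed V_closed
    by algebra
  also have "\<dots> = eval_S U (up_ring.monom (UP R) f 0 \<otimes>\<^bsub>UP R\<^esub> A')
      \<oplus>\<^bsub>S\<^esub> eval_S V (indet \<otimes>\<^bsub>UP R\<^esub> (up_ring.monom (UP R) a0 0 \<oplus>\<^bsub>UP R\<^esub> B))"
    using a0 A' B f_carrier by (simp add: U_mult_V)
  also have "\<dots> \<in> uv_sums"
    using a0 A' B f_carrier by (intro uv_sumsI) simp_all
  finally show ?thesis .
qed

lemma proj_in_uv_sums:
  assumes "p \<in> carrier (Ruv R)" shows "proj p \<in> uv_sums"
  using assms
proof (induction "deg (UP R) p" arbitrary: p rule: less_induct)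
  case less
  obtain p' where p': "p' \<in> carrier (Ruv R)"
    and p_eq: "p = up_ring.monom (Ruv R) (up_ring.coeff (Ruv R) p 0) 0 \<oplus>\<^bsub>Ruv R\<^esub> var_v R \<otimes>\<^bsub>Ruv R\<^esub> p'"
    and coeff_p': "\<And>j. up_ring.coeff (Ruv R) p' j = up_ring.coeff (Ruv R) p (Suc j)"
    using Q.poly_decomp_X[OF less.prems] unfolding var_v_def by blast
  have p0: "up_ring.coeff (Ruv R) p 0 \<in> carrier (UP R)" using less.prems by simp
  show ?case
  proof (cases "deg (UP R) p = 0")
    case True
    then have "p = up_ring.monom (Ruv R) (up_ring.coeff (Ruv R) p 0) 0"
      by (rule Q.deg_zero_impl_monom[OF less.prems])
    then show ?thesis using eval_U_in_uv_sums[OF p0] proj_const_v[OF p0] by simp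
  next
    case False
    have "deg (UP R) p' < deg (UP R) p"
    proof -
      have "deg (UP R) p' \<le> deg (UP R) p - 1"
        using coeff_p' Q.deg_aboveD[OF _ less.prems] by (intro Q.deg_aboveI[OF _ p']) simp
      then show ?thesis using False by arith
    qed
    then have "proj p' \<in> uv_sums" using less.hyps p' by blast
    moreover have "proj p = eval_S U (up_ring.coeff (Ruv R) p 0) \<oplus>\<^bsub>S\<^esub> V \<otimes>\<^bsub>S\<^esub> proj p'"
      using ring_hom_add[OF proj_hom] ring_hom_mult[OF proj_hom] p0 p' p_eq proj_const_v[OF p0]
      by (metis Q.monom_closed Q.UP_mult_closed var_v_closed)
    ultimately show ?thesis
      using uv_sums_add[OF eval_U_in_uv_sums[OF p0] V_mult_uv_sums] by simp
  qed
qed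

lemma S_elem_uv_sum:
  assumes "x \<in> carrier S"
  obtains A B where "A \<in> carrier (UP R)" "B \<in> carrier (UP R)" "x = eval_S U A \<oplus>\<^bsub>S\<^esub> eval_S V B"
  using assms proj_in_uv_sums by (metis proj_surj uv_sumsE)

text \<open>A nonzero multiple of \<open>uv - f\<close> has positive \<open>v\<close>-degree.\<close>

lemma eval_U_inj:
  assumes A: "A \<in> carrier (UP R)" and B: "B \<in> carrier (UP R)" and eq: "eval_S U A = eval_S U B"
  shows "A = B"
proof -
  define D where "D = up_ring.monom (Ruv R) A 0 \<ominus>\<^bsub>Ruv R\<^esub> up_ring.monom (Ruv R) B 0"
  have D: "D \<in> carrier (Ruv R)" using A B by (simp add: D_def)
  have coeff_D: "up_ring.coeff (Ruv R) D n = (if n = 0 then A \<ominus>\<^bsub>UP R\<^esub> B else \<zero>\<^bsub>UP R\<^esub>)" for n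
    using A B by (simp add: D_def)
  have "D \<in> I"
    unfolding D_def using A B eq by (intro proj_eqD) (simp_all add: proj_const_v)
  then obtain z where z: "z \<in> carrier (Ruv R)" and D_eq: "D = z \<otimes>\<^bsub>Ruv R\<^esub> rel"
    unfolding uv_ideal_def cgenideal_def by blast
  have "up_ring.coeff (Ruv R) rel 1 = indet"
    using f_carrier by (simp add: var_u_def var_v_def const_uv_def a_minus_def)
  moreover have "indet \<noteq> \<zero>\<^bsub>UP R\<^esub>"
  proof
    assume "indet = \<zero>\<^bsub>UP R\<^esub>"
    then have "up_ring.coeff (UP R) indet 1 = \<zero>" by simp
    then show False by simp
  qed
  ultimately have rel_nz: "rel \<noteq> \<zero>\<^bsub>Ruv R\<^esub>" and "1 \<le> deg (UP R) rel"
    using Q.deg_belowI[OF _ rel_closed] by auto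
  have "z = \<zero>\<^bsub>Ruv R\<^esub>"
  proof (rule ccontr)
    assume "z \<noteq> \<zero>\<^bsub>Ruv R\<^esub>"
    then have "1 \<le> deg (UP R) D"
      using Q.deg_mult[OF _ rel_nz z rel_closed] \<open>1 \<le> deg (UP R) rel\<close> D_eq by simp
    moreover have "deg (UP R) D \<le> 0"
      using coeff_D by (intro Q.deg_aboveI[OF _ D]) simp
    ultimately show False by simp
  qed
  then have "A \<ominus>\<^bsub>UP R\<^esub> B = \<zero>\<^bsub>UP R\<^esub>"
    using coeff_D[of 0] D_eq by simp
  then show ?thesis using P.P.r_right_minus_eq[OF A B] by simp
qed

section \<open>Factorisations of constants in \<open>S\<close>\<close>

lemma U_pow_mult_eval_V:
  "B \<in> carrier (UP R) \<Longrightarrow> deg R B \<le> n \<Longrightarrow>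
    \<exists>C\<in>carrier (UP R). U [^]\<^bsub>S\<^esub> n \<otimes>\<^bsub>S\<^esub> eval_S V B = eval_S U C
      \<and> up_ring.coeff (UP R) C 0 = up_ring.coeff (UP R) B n \<otimes> f [^] n"
proof (induction n arbitrary: B)
  case 0
  then have B: "B \<in> carrier (UP R)" and "B = up_ring.monom (UP R) (up_ring.coeff (UP R) B 0) 0"
    using P.deg_zero_impl_monom by auto
  then have "eval_S V B = eval_S U B"
    by (metis P.coeff_closed eval_S_const U_closed V_closed)
  then show ?case using B by (intro bexI[of _ B]) simp_all
next
  case (Suc n)
  obtain B' where B': "B' \<in> carrier (UP R)"
    and B_eq: "B = up_ring.monom (UP R) (up_ring.coeff (UP R) B 0) 0 \<oplus>\<^bsub>UP R\<^esub> indet \<otimes>\<^bsub>UP R\<^esub> B'"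
    and coeff_B': "\<And>j. up_ring.coeff (UP R) B' j = up_ring.coeff (UP R) B (Suc j)"
    using P.poly_decomp_X[OF Suc.prems(1)] by blast
  define b0 where "b0 = up_ring.coeff (UP R) B 0"
  have b0: "b0 \<in> carrier R" using Suc.prems by (simp add: b0_def)
  have "deg R B' \<le> n"
    using coeff_B' P.deg_aboveD[OF _ Suc.prems(1)] Suc.prems(2) by (intro P.deg_aboveI[OF _ B']) simp
  then obtain C' where C': "C' \<in> carrier (UP R)"
    and C'_eq: "U [^]\<^bsub>S\<^esub> n \<otimes>\<^bsub>S\<^esub> eval_S V B' = eval_S U C'"
    and coeff_C': "up_ring.coeff (UP R) C' 0 = up_ring.coeff (UP R) B' n \<otimes> f [^] n"
    using Suc.IH[OF B'] by blast
  define C where "C = up_ring.monom (UP R) b0 (Suc n) \<oplus>\<^bsub>UP R\<^esub> up_ring.monom (UP R) f 0 \<otimes>\<^bsub>UP R\<^esub> C'"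
  have C: "C \<in> carrier (UP R)" using b0 C' f_carrier by (simp add: C_def)
  have B_at_V: "eval_S V B = \<iota> b0 \<oplus>\<^bsub>S\<^esub> V \<otimes>\<^bsub>S\<^esub> eval_S V B'"
    by (subst B_eq) (simp add: Suc.prems(1) b0 B' b0_def)
  have "U [^]\<^bsub>S\<^esub> Suc n \<otimes>\<^bsub>S\<^esub> eval_S V B
      = \<iota> b0 \<otimes>\<^bsub>S\<^esub> U [^]\<^bsub>S\<^esub> Suc n \<oplus>\<^bsub>S\<^esub> (U \<otimes>\<^bsub>S\<^esub> V) \<otimes>\<^bsub>S\<^esub> (U [^]\<^bsub>S\<^esub> n \<otimes>\<^bsub>S\<^esub> eval_S V B')"
    unfolding B_at_V S.nat_pow_Suc
    using S.nat_pow_closed[OF U_closed, of n] to_S_closed[OF b0] eval_S_closed[OF V_closed B'] U_closed V_closed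
    by algebra
  also have "\<dots> = eval_S U C"
    using b0 C' f_carrier by (simp add: C_def C'_eq U_mult_V)
  finally have "U [^]\<^bsub>S\<^esub> Suc n \<otimes>\<^bsub>S\<^esub> eval_S V B = eval_S U C" .
  moreover have "up_ring.coeff (UP R) C 0 = up_ring.coeff (UP R) B (Suc n) \<otimes> f [^] Suc n"
    using b0 C' f_carrier Suc.prems(1)
    by (simp add: C_def P.monom_mult_is_smult coeff_C' coeff_B' m_ac)
  ultimately show ?case using C by blast
qed

lemma f_pow_nonzero: "f [^] (n::nat) \<noteq> \<zero>"
  using mult_of.nat_pow_closed[of f n] f_carrier f_nonzero by (simp add: nat_pow_mult_of)

text \<open>For \<open>x = A(u) + B(v)\<close> take \<open>n = deg B\<close>; the constant term is then \<open>lc(B) f\<^sup>n\<close>.\<close>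

lemma U_pow_mult_in_R_u:
  assumes "x \<in> carrier S"
  obtains n C where "C \<in> carrier (UP R)" "U [^]\<^bsub>S\<^esub> (n::nat) \<otimes>\<^bsub>S\<^esub> x = eval_S U C"
    and "n = 0 \<or> (up_ring.coeff (UP R) C 0 \<noteq> \<zero> \<and> f divides up_ring.coeff (UP R) C 0)"
proof -
  obtain A B where A: "A \<in> carrier (UP R)" and B: "B \<in> carrier (UP R)"
    and x: "x = eval_S U A \<oplus>\<^bsub>S\<^esub> eval_S V B"
    using S_elem_uv_sum[OF assms] .
  define n where "n = deg R B"
  obtain C' where C': "C' \<in> carrier (UP R)" and C'_eq: "U [^]\<^bsub>S\<^esub> n \<otimes>\<^bsub>S\<^esub> eval_S V B = eval_S U C'"
    and coeff_C': "up_ring.coeff (UP R) C' 0 = up_ring.coeff (UP R) B n \<otimes> f [^] n"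
    using U_pow_mult_eval_V[OF B] by (auto simp: n_def)
  define C where "C = up_ring.monom (UP R) \<one> n \<otimes>\<^bsub>UP R\<^esub> A \<oplus>\<^bsub>UP R\<^esub> C'"
  have C: "C \<in> carrier (UP R)" using A C' by (simp add: C_def)
  have "eval_S U C = U [^]\<^bsub>S\<^esub> n \<otimes>\<^bsub>S\<^esub> eval_S U A \<oplus>\<^bsub>S\<^esub> U [^]\<^bsub>S\<^esub> n \<otimes>\<^bsub>S\<^esub> eval_S V B"
    using A C' by (simp add: C_def C'_eq)
  also have "\<dots> = U [^]\<^bsub>S\<^esub> n \<otimes>\<^bsub>S\<^esub> x"
    using A B by (simp add: x S.r_distr)
  finally have "U [^]\<^bsub>S\<^esub> n \<otimes>\<^bsub>S\<^esub> x = eval_S U C" ..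
  moreover have "n = 0 \<or> (up_ring.coeff (UP R) C 0 \<noteq> \<zero> \<and> f divides up_ring.coeff (UP R) C 0)"
  proof (cases n)
    case (Suc k)
    have lc: "up_ring.coeff (UP R) B n \<noteq> \<zero>" "up_ring.coeff (UP R) B n \<in> carrier R"
      using P.lcoeff_nonzero_deg[OF _ B] Suc B by (simp_all add: n_def)
    have "up_ring.coeff (UP R) C 0 = up_ring.coeff (UP R) B n \<otimes> f [^] n"
      using P.coeff_monom_mult_below[OF one_closed A, of 0 n] Suc A B C' coeff_C' f_carrier by (simp add: C_def)
    moreover have "\<dots> = f \<otimes> (up_ring.coeff (UP R) B n \<otimes> f [^] k)"
      using lc f_carrier by (simp add: Suc m_ac)
    ultimately show ?thesis
      using lc f_carrier f_pow_nonzero integral_iff by (auto intro: dividesI)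
  qed simp
  ultimately show ?thesis using that C by blast
qed

text \<open>In \<open>R[u, u\<^sup>-\<^sup>1]\<close> the factors of a nonzero constant are monomials \<open>\<beta> u\<^sup>k\<close>, \<open>\<gamma> u\<^sup>-\<^sup>k\<close>;
  for \<open>k \<noteq> 0\<close> one of them is a multiple of a positive power of \<open>v = f u\<^sup>-\<^sup>1\<close>.\<close>

lemma factor_of_to_S:
  assumes a: "a \<in> carrier R" "a \<noteq> \<zero>" and b: "b \<in> carrier S" and c: "c \<in> carrier S"
    and bc: "b \<otimes>\<^bsub>S\<^esub> c = \<iota> a"
  shows "f divides a \<or> (\<exists>\<beta>\<in>carrier R. b = \<iota> \<beta> \<and> \<beta> divides a)"
proof -
  obtain n B where B: "B \<in> carrier (UP R)" and b_B: "U [^]\<^bsub>S\<^esub> (n::nat) \<otimes>\<^bsub>S\<^esub> b = eval_S U B"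
    and n: "n = 0 \<or> (up_ring.coeff (UP R) B 0 \<noteq> \<zero> \<and> f divides up_ring.coeff (UP R) B 0)"
    using U_pow_mult_in_R_u[OF b] .
  obtain m C where C: "C \<in> carrier (UP R)" and c_C: "U [^]\<^bsub>S\<^esub> (m::nat) \<otimes>\<^bsub>S\<^esub> c = eval_S U C"
    and m: "m = 0 \<or> (up_ring.coeff (UP R) C 0 \<noteq> \<zero> \<and> f divides up_ring.coeff (UP R) C 0)"
    using U_pow_mult_in_R_u[OF c] .
  have "eval_S U (B \<otimes>\<^bsub>UP R\<^esub> C) = (b \<otimes>\<^bsub>S\<^esub> c) \<otimes>\<^bsub>S\<^esub> (U [^]\<^bsub>S\<^esub> n \<otimes>\<^bsub>S\<^esub> U [^]\<^bsub>S\<^esub> m)"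
    using B C b c S.nat_pow_closed[OF U_closed] by (simp add: b_B[symmetric] c_C[symmetric] S.m_ac)
  also have "\<dots> = eval_S U (up_ring.monom (UP R) a (n + m))"
    using a by (simp add: bc S.nat_pow_mult)
  finally have BC: "B \<otimes>\<^bsub>UP R\<^esub> C = up_ring.monom (UP R) a (n + m)"
    using a B C by (intro eval_U_inj) simp_all
  then obtain \<beta> \<gamma> k l where \<beta>: "\<beta> \<in> carrier R" and \<gamma>: "\<gamma> \<in> carrier R"
    and a_eq: "\<beta> \<otimes> \<gamma> = a" and kl: "k + l = n + m"
    and B_eq: "B = up_ring.monom (UP R) \<beta> k" and C_eq: "C = up_ring.monom (UP R) \<gamma> l"
    using P.factors_of_monom[OF B C a] by blast
  have "\<beta> divides a" using a_eq[symmetric] \<gamma> by (rule dividesI')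
  consider "n = 0" "m = 0" | "n \<noteq> 0" | "m \<noteq> 0" by blast
  then show ?thesis
  proof cases
    case 1
    then have "b = eval_S U (up_ring.monom (UP R) \<beta> 0)"
      using kl b_B b by (simp add: B_eq)
    then show ?thesis using \<beta> \<open>\<beta> divides a\<close> by auto
  next
    case 2
    then have "f divides \<beta>"
      using n \<beta> by (simp add: B_eq split: if_splits)
    then show ?thesis using a_eq divides_prod_r f_carrier \<gamma> by metis
  next
    case 3
    then have "f divides \<gamma>"
      using m \<gamma> by (simp add: C_eq split: if_splits)
    then show ?thesis using a_eq divides_prod_l f_carrier \<beta> \<gamma> by metis
  qed
qed

section \<open>The retraction \<open>S \<rightarrow> R\<close>\<close>

text \<open>The \<open>R\<close>-algebra map \<open>u \<mapsto> f, v \<mapsto> 1\<close> vanishes on \<open>uv - f\<close>, so it retracts \<open>S\<close> onto \<open>R\<close>.\<close>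

definition retraction :: "(nat \<Rightarrow> nat \<Rightarrow> 'a) \<Rightarrow> 'a"
  where "retraction = UnivPoly.eval (UP R) R (UnivPoly.eval R R id f) \<one>"

interpretation eval_at_f: UP_pre_univ_prop R R id "UP R"
  by (rule UP_pre_univ_propI[OF cring_axioms cring_axioms id_ring_hom])

interpretation eval_at_1: UP_pre_univ_prop "UP R" R "UnivPoly.eval R R id f" "Ruv R"
  by (rule UP_pre_univ_propI[OF P.UP_cring cring_axioms eval_at_f.eval_ring_hom[OF f_carrier]])

interpretation retraction: ring_hom_cring "Ruv R" R retraction
  unfolding retraction_def
  by (rule ring_hom_cringI[OF Q.UP_cring cring_axioms eval_at_1.eval_ring_hom[OF one_closed]])

lemma retraction_const_uv [simp]: "r \<in> carrier R \<Longrightarrow> retraction (const_uv R r) = r"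
  unfolding retraction_def const_uv_def using f_carrier
  by (simp add: eval_at_1.eval_const eval_at_f.eval_const)

lemma retraction_rel: "retraction rel = \<zero>"
proof -
  have "retraction (var_u R) = f"
    unfolding retraction_def var_u_def using eval_at_f.eval_monom1[OF f_carrier]
    by (simp add: eval_at_1.eval_const)
  moreover have "retraction (var_v R) = \<one>"
    unfolding retraction_def var_v_def using eval_at_1.eval_monom1[OF one_closed] by simp
  ultimately show ?thesis using f_carrier by simp
qed

lemma retraction_proj_eq:
  assumes p: "p \<in> carrier (Ruv R)" and q: "q \<in> carrier (Ruv R)" and eq: "proj p = proj q"
  shows "retraction p = retraction q"
proof -
  obtain z where z: "z \<in> carrier (Ruv R)" and diff: "p \<ominus>\<^bsub>Ruv R\<^esub> q = z \<otimes>\<^bsub>Ruv R\<^esub> rel"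
    using proj_eqD[OF p q eq] unfolding uv_ideal_def cgenideal_def by blast
  have "retraction p \<ominus> retraction q = retraction (z \<otimes>\<^bsub>Ruv R\<^esub> rel)"
    using p q by (simp only: diff[symmetric] retraction.hom_sub)
  also have "\<dots> = \<zero>"
    using z by (simp add: retraction_rel)
  finally show ?thesis
    using p q r_right_minus_eq by simp
qed

lemma to_S_eq_zero_iff:
  assumes a: "a \<in> carrier R" shows "\<iota> a = \<zero>\<^bsub>S\<^esub> \<longleftrightarrow> a = \<zero>"
proof
  assume "\<iota> a = \<zero>\<^bsub>S\<^esub>"
  then have "proj (const_uv R a) = proj \<zero>\<^bsub>Ruv R\<^esub>"
    using ring_hom_zero[OF proj_hom Q.UP_ring S.ring_axioms] by (simp add: to_S_def proj_def)
  then have "retraction (const_uv R a) = retraction \<zero>\<^bsub>Ruv R\<^esub>"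
    using a by (intro retraction_proj_eq) simp_all
  then show "a = \<zero>" using a by simp
next
  assume "a = \<zero>"
  then show "\<iota> a = \<zero>\<^bsub>S\<^esub>"
    using ring_hom_zero[OF to_S_hom ring_axioms S.ring_axioms] by (simp only:)
qed

lemma to_S_divides_iff:
  assumes a: "a \<in> carrier R" and b: "b \<in> carrier R"
  shows "\<iota> a divides\<^bsub>S\<^esub> \<iota> b \<longleftrightarrow> a divides b"
proof
  assume "\<iota> a divides\<^bsub>S\<^esub> \<iota> b"
  then obtain s where "\<iota> b = \<iota> a \<otimes>\<^bsub>S\<^esub> s" and s: "s \<in> carrier S" by (rule dividesE)
  moreover obtain p where p: "p \<in> carrier (Ruv R)" and "s = proj p"
    using proj_surj[OF s] .
  ultimately have "proj (const_uv R b) = proj (const_uv R a \<otimes>\<^bsub>Ruv R\<^esub> p)"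
    using a ring_hom_mult[OF proj_hom] by (simp add: to_S_def proj_def)
  then have "retraction (const_uv R b) = retraction (const_uv R a \<otimes>\<^bsub>Ruv R\<^esub> p)"
    using a b p by (intro retraction_proj_eq) simp_all
  then have "b = a \<otimes> retraction p"
    using a b p by simp
  then show "a divides b" by (rule dividesI'[OF _ retraction.hom_closed[OF p]])
next
  assume "a divides b"
  then obtain c where "b = a \<otimes> c" and c: "c \<in> carrier R" by (rule dividesE)
  then have "\<iota> b = \<iota> a \<otimes>\<^bsub>S\<^esub> \<iota> c"
    using a ring_hom_mult[OF to_S_hom] by simp
  then show "\<iota> a divides\<^bsub>S\<^esub> \<iota> b"
    by (rule dividesI'[OF _ to_S_closed[OF c]])
qed

lemma to_S_Units_iff:
  assumes a: "a \<in> carrier R" shows "\<iota> a \<in> Units S \<longleftrightarrow> a \<in> Units R"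
proof -
  have "\<iota> a \<in> Units S \<longleftrightarrow> \<iota> a divides\<^bsub>S\<^esub> \<iota> \<one>"
    using S.Unit_eq_dividesone[OF to_S_closed[OF a]] by (simp only: to_S_one)
  also have "\<dots> \<longleftrightarrow> a divides \<one>"
    by (rule to_S_divides_iff[OF a one_closed])
  finally show ?thesis
    using Unit_eq_dividesone[OF a] by (simp only:)
qed

lemma to_S_properfactor_iff:
  "a \<in> carrier R \<Longrightarrow> b \<in> carrier R \<Longrightarrow> properfactor S (\<iota> a) (\<iota> b) \<longleftrightarrow> properfactor R a b"
  by (simp add: properfactor_def to_S_divides_iff)

lemma irreducible_to_S_imp_irreducible:
  assumes a: "a \<in> carrier R" and irr: "ring_irreducible\<^bsub>S\<^esub> (\<iota> a)"
  shows "ring_irreducible a"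
proof -
  have "\<iota> a \<noteq> \<zero>\<^bsub>S\<^esub>" and irr_S: "irreducible S (\<iota> a)"
    using irr by (simp_all add: ring_irreducible_def)
  then have "a \<noteq> \<zero>" and "a \<notin> Units R"
    using a to_S_eq_zero_iff to_S_Units_iff by (auto elim: irreducibleE)
  moreover have "b \<in> Units R" if b: "b \<in> carrier R" and "properfactor R b a" for b
  proof -
    have "properfactor S (\<iota> b) (\<iota> a)"
      using to_S_properfactor_iff[OF b a] \<open>properfactor R b a\<close> by simp
    then have "\<iota> b \<in> Units S"
      using irreducibleD[OF irr_S] b by simp
    then show ?thesis using to_S_Units_iff[OF b] by simp
  qed
  ultimately show ?thesis
    by (simp add: ring_irreducible_def irreducibleI)
qed

lemma irreducible_imp_irreducible_to_S:
  assumes a: "a \<in> carrier R" and f_nonunit: "f \<notin> Units R"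
    and irr: "ring_irreducible a" and not_assoc: "\<not> a \<sim> f"
  shows "ring_irreducible\<^bsub>S\<^esub> (\<iota> a)"
proof -
  have a_nz: "a \<noteq> \<zero>" and irr_a: "irreducible R a"
    using irr by (simp_all add: ring_irreducible_def)
  then have "\<iota> a \<noteq> \<zero>\<^bsub>S\<^esub>" and "\<iota> a \<notin> Units S"
    using a to_S_eq_zero_iff to_S_Units_iff by (auto elim: irreducibleE)
  moreover have "b \<in> Units S" if b: "b \<in> carrier S" and pf: "properfactor S b (\<iota> a)" for b
  proof -
    obtain c where "\<iota> a = b \<otimes>\<^bsub>S\<^esub> c" and c: "c \<in> carrier S"
      using pf unfolding properfactor_def by (auto elim: dividesE)
    then consider "f divides a" | \<beta> where "\<beta> \<in> carrier R" "b = \<iota> \<beta>" "\<beta> divides a"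
      using factor_of_to_S[OF a a_nz b c] by auto
    then show ?thesis
    proof cases
      case 1
      then have "properfactor R f a"
        using not_assoc by (simp add: properfactor_def associated_def)
      then have "f \<in> Units R"
        using irreducibleD[OF irr_a] f_carrier by simp
      with f_nonunit show ?thesis by contradiction
    next
      case 2
      then have "properfactor R \<beta> a"
        using pf to_S_properfactor_iff[OF _ a] by simp
      then have "\<beta> \<in> Units R"
        using irreducibleD[OF irr_a] 2 by simp
      then show ?thesis using to_S_Units_iff 2 by simp
    qed
  qed
  ultimately show ?thesis
    by (simp add: ring_irreducible_def irreducibleI)
qed

end

theorem lemma1p4:
  fixes R :: "('a, 'm) ring_scheme" and f a :: 'a
  assumes "domain R"
    and "f \<in> carrier R" and "f \<noteq> \<zero>\<^bsub>R\<^esub>" and "f \<notin> Units R"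
    and "a \<in> carrier R"
  shows "(ring_irreducible\<^bsub>S_ring R f\<^esub> (to_S R f a) \<longrightarrow> ring_irreducible\<^bsub>R\<^esub> a)
       \<and> (ring_irreducible\<^bsub>R\<^esub> a \<and> \<not> (a \<sim>\<^bsub>R\<^esub> f)
            \<longrightarrow> ring_irreducible\<^bsub>S_ring R f\<^esub> (to_S R f a))"
proof -
  interpret uv_quotient R f
    by (rule uv_quotient.intro[OF assms(1-3)])
  show ?thesis
    using irreducible_to_S_imp_irreducible irreducible_imp_irreducible_to_S assms(4,5) by blast
qed

end
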